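(* Let $A\in\mathbb{C}^{n\times n}$ be Hermitian and let $Q\in\mathbb{C}^{n\times k}$, $2\le k\le n$, have orthonormal columns. Let $Q^*AQ=\Omega\widehat\Lambda\Omega^*$ with $\Omega$ unitary and $\widehat\Lambda=\mathrm{diag}(\widehat\lambda_1,\ldots,\widehat\lambda_k)$, and let $\widehat X=[\widehat x_1,\ldots,\widehat x_k]=Q\Omega$. Let $Q_\perp$ be such that $[Q\ Q_\perp]$ is unitary, and set $R=Q_\perp^*AQ\Omega=[r_1,\ldots,r_k]$, $A_3=Q_\perp^*AQ_\perp$, $\widehat\Lambda_2=\mathrm{diag}(\widehat\lambda_2,\ldots,\widehat\lambda_k)$, $R_2=[r_2,\ldots,r_k]$, and $\widehat x=\widehat x_1$. Let $(\lambda,x)$ be an eigenpair of $A$ with $\|x\|=1$, and define $\mathrm{Gap}=\min|\lambda-\lambda(A_3)|$, $\mathrm{gap}=\min|\lambda-\lambda(\widehat\Lambda_2)|$. Then: (i) if $\mathrm{Gap}>\|R_2\|^2/\mathrm{gap}$, then $$\sin\angle(x,\widehat x)\le\frac{\|r_1\|}{\mathrm{Gap}-\frac{\|R_2\|^2}{\mathrm{gap}}}\sqrt{1+\frac{\|R_2\|^2}{\mathrm{gap}^2}};$$ (ii) if $\mathrm{Gap}>\sum_{i=2}^k\frac{\|r_i\|^2}{|\lambda-\widehat\lambda_i|}$, then $$\sin\angle(x,\widehat x)\le\frac{\|r_1\|}{\mathrm{Gap}-\sum_{i=2}^k\frac{\|r_i\|^2}{|\lambda-\widehat\lambda_i|}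}\sqrt{1+\Big(\sum_{i=2}^k\frac{\|r_i\|}{|\lambda-\widehat\lambda_i|}\Big)^2}.$$
   Context: $\|\cdot\|$ is the Euclidean norm for vectors and the spectral norm for matrices. $\lambda(M)$ is the spectrum of a Hermitian matrix $M$ and $\min|\lambda-\lambda(M)|$ its distance to $\lambda$. For unit vectors, $\angle(x,\widehat x)=\arccos|\widehat x^*x|$. Note $\|r_i\|=\|A\widehat x_i-\widehat\lambda_i\widehat x_i\|$. A bound with a vanishing denominator is interpreted as $+\infty$. *)

theory Defs
  imports "Jordan_Normal_Form.Schur_Decomposition" "HOL-Library.Extended_Real"
begin

definition hermitian_mat :: "complex mat \<Rightarrow> bool" where
  "hermitian_mat M \<longleftrightarrow> mat_adjoint M = M"

definition unitary_mat :: "complex mat \<Rightarrow> bool" where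
  "unitary_mat U \<longleftrightarrow> dim_row U = dim_col U \<and>
     mat_adjoint U * U = 1\<^sub>m (dim_col U) \<and> U * mat_adjoint U = 1\<^sub>m (dim_row U)"

definition vnorm :: "complex vec \<Rightarrow> real" where
  "vnorm v = sqrt (\<Sum>i<dim_vec v. (cmod (v $ i))\<^sup>2)"

definition vinner :: "complex vec \<Rightarrow> complex vec \<Rightarrow> complex" where
  "vinner y x = (\<Sum>i<dim_vec x. cnj (y $ i) * x $ i)"

definition spec_norm :: "complex mat \<Rightarrow> real" where
  "spec_norm M = Sup {vnorm (M *\<^sub>v v) | v. v \<in> carrier_vec (dim_col M) \<and> vnorm v = 1}"

definition vangle :: "complex vec \<Rightarrow> complex vec \<Rightarrow> real" where
  "vangle x xh = arccos (cmod (vinner xh x))"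

text \<open>Distance from l to the spectrum of M; +\<infinity> when the spectrum is empty
  (e.g. for a 0 x 0 matrix).\<close>
definition spec_dist :: "complex \<Rightarrow> complex mat \<Rightarrow> ereal" where
  "spec_dist l M = (INF mu \<in> {mu. eigenvalue M mu}. ereal (cmod (l - mu)))"

definition diag_of :: "nat \<Rightarrow> (nat \<Rightarrow> complex) \<Rightarrow> complex mat" where
  "diag_of k d = mat k k (\<lambda>(i,j). if i = j then d i else 0)"

definition hcat :: "complex mat \<Rightarrow> complex mat \<Rightarrow> complex mat" where
  "hcat P Q = mat (dim_row P) (dim_col P + dim_col Q)
     (\<lambda>(i,j). if j < dim_col P then P $$ (i,j) else Q $$ (i, j - dim_col P))"

end

theory Submission
  imports Defs "Jordan_Normal_Form.Spectral_Radius" "HOL-Analysis.L2_Norm"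
begin

(*
  Write X = Q Omega for the Ritz basis, z = X^* x and y = Q_perp^* x, so that x = X z + Q_perp y
  and |z|^2 + |y|^2 = 1; then sin angle(x, xh) = sqrt (|y|^2 + |z'|^2) with z' = (z_2, ..., z_k).
  Projecting A x = lambda x onto the two blocks gives

    (lambda - lh_i) z_i = r_i^* y      and      (lambda - A_3) y = R z = z_1 r_1 + R_2 z'.

  By the spectral theorem for the Hermitian matrix A_3, the second identity yields
  Gap |y| <= |r_1| + |R_2 z'|, while the first bounds z' by a multiple of |y|: through R_2^* y and
  the spectral norm of R_2 for (i), column by column for (ii).  Solving the resulting linear
  inequality for |y| gives both estimates.
*)

section \<open>Adjoints, inner products and norms\<close>

lemma dim_mat_adjoint [simp]:
  "dim_row (mat_adjoint A) = dim_col A" "dim_col (mat_adjoint A) = dim_row A"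
  by (simp_all add: mat_adjoint_def)

lemma mat_adjoint_carrier [simp]: "A \<in> carrier_mat n m \<Longrightarrow> mat_adjoint A \<in> carrier_mat m n"
  by auto

lemma index_mat_adjoint [simp]:
  fixes A :: "complex mat"
  shows "i < dim_col A \<Longrightarrow> j < dim_row A \<Longrightarrow> mat_adjoint A $$ (i, j) = cnj (A $$ (j, i))"
  by (simp add: mat_adjoint_def mat_of_rows_def)

lemma mat_adjoint_mat_adjoint [simp]: "mat_adjoint (mat_adjoint A) = (A :: complex mat)"
  by (rule eq_matI) auto

lemma mat_adjoint_one [simp]: "mat_adjoint (1\<^sub>m n) = (1\<^sub>m n :: complex mat)"
  by (rule eq_matI) auto

lemma mat_adjoint_zero [simp]: "mat_adjoint (0\<^sub>m n m) = (0\<^sub>m m n :: complex mat)"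
  by (rule eq_matI) auto

lemma mat_adjoint_mult:
  fixes A B :: "complex mat"
  assumes "A \<in> carrier_mat n k" "B \<in> carrier_mat k m"
  shows "mat_adjoint (A * B) = mat_adjoint B * mat_adjoint A"
  using assms by (intro eq_matI) (auto simp: scalar_prod_def cnj_sum mult.commute)

lemma mat_adjoint_four_block_mat:
  fixes A B C D :: "complex mat"
  assumes "A \<in> carrier_mat n1 m1" "B \<in> carrier_mat n1 m2" "C \<in> carrier_mat n2 m1" "D \<in> carrier_mat n2 m2"
  shows "mat_adjoint (four_block_mat A B C D) =
    four_block_mat (mat_adjoint A) (mat_adjoint C) (mat_adjoint B) (mat_adjoint D)"
  using assms by (intro eq_matI) auto

lemma mat_adjoint_sandwich:
  fixes A P X :: "complex mat"
  assumes A: "A \<in> carrier_mat n n" "hermitian_mat A" and P: "P \<in> carrier_mat n m" and X: "X \<in> carrier_mat n k"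
  shows "mat_adjoint (mat_adjoint P * A * X) = mat_adjoint X * A * P"
proof -
  have "mat_adjoint (mat_adjoint P * A * X) = mat_adjoint X * mat_adjoint (mat_adjoint P * A)"
    by (rule mat_adjoint_mult) (use A P X in auto)
  also have "mat_adjoint (mat_adjoint P * A) = A * P"
    using A P by (simp add: mat_adjoint_mult[of _ m n _ n] hermitian_mat_def)
  finally show ?thesis
    using A P X by (simp add: assoc_mult_mat[of _ k n _ n _ m])
qed

lemma hermitian_mat_congruence:
  assumes "M \<in> carrier_mat n n" "hermitian_mat M" "W \<in> carrier_mat n k"
  shows "hermitian_mat (mat_adjoint W * M * W)"
  using mat_adjoint_sandwich[OF assms assms(3)] by (simp add: hermitian_mat_def)

lemma power2_vnorm: "(vnorm v)\<^sup>2 = (\<Sum>i<dim_vec v. (cmod (v $ i))\<^sup>2)"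
  unfolding vnorm_def by (simp add: sum_nonneg)

lemma vnorm_eq_L2_set: "vnorm v = L2_set (\<lambda>i. cmod (v $ i)) {..<dim_vec v}"
  by (simp add: vnorm_def L2_set_def)

lemma vnorm_nonneg [simp]: "0 \<le> vnorm v"
  by (simp add: vnorm_eq_L2_set)

lemma norm_index_le_vnorm: "i < dim_vec v \<Longrightarrow> cmod (v $ i) \<le> vnorm v"
  unfolding vnorm_eq_L2_set by (rule member_le_L2_set) auto

lemma vnorm_eq_0_iff: "v \<in> carrier_vec n \<Longrightarrow> vnorm v = 0 \<longleftrightarrow> v = 0\<^sub>v n"
  by (auto simp: vnorm_eq_L2_set L2_set_eq_0_iff vec_eq_iff)

lemma vnorm_smult: "vnorm (a \<cdot>\<^sub>v v) = cmod a * vnorm v"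
proof -
  have "vnorm (a \<cdot>\<^sub>v v) = L2_set (\<lambda>i. cmod a * cmod (v $ i)) {..<dim_vec v}"
    unfolding vnorm_eq_L2_set by (auto simp: norm_mult intro: L2_set_cong)
  then show ?thesis
    by (simp add: L2_set_right_distrib vnorm_eq_L2_set)
qed

lemma vnorm_add_le:
  assumes "dim_vec u = dim_vec v"
  shows "vnorm (u + v) \<le> vnorm u + vnorm v"
proof -
  have "vnorm (u + v) = L2_set (\<lambda>i. cmod (u $ i + v $ i)) {..<dim_vec v}"
    unfolding vnorm_eq_L2_set using assms by (auto intro: L2_set_cong)
  also have "\<dots> \<le> L2_set (\<lambda>i. cmod (u $ i) + cmod (v $ i)) {..<dim_vec v}"
    by (intro L2_set_mono norm_triangle_ineq) auto
  also have "\<dots> \<le> vnorm u + vnorm v"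
    unfolding vnorm_eq_L2_set using assms by (simp add: L2_set_triangle_ineq)
  finally show ?thesis .
qed

lemma vnorm_unit_vec: "i < n \<Longrightarrow> vnorm (unit_vec n i) = 1"
  by (simp add: vnorm_def unit_vec_def if_distrib[of "\<lambda>z. (cmod z)\<^sup>2"] cong: if_cong)

lemma vinner_self: "vinner v v = of_real ((vnorm v)\<^sup>2)"
  unfolding vinner_def power2_vnorm of_real_sum
  by (intro sum.cong) (simp_all add: complex_norm_square mult.commute del: of_real_power)

lemma norm_vinner_le: "dim_vec y = dim_vec x \<Longrightarrow> cmod (vinner y x) \<le> vnorm y * vnorm x"
  unfolding vinner_def vnorm_eq_L2_set
  by (rule order_trans[OF norm_sum])
    (use L2_set_mult_ineq[of "\<lambda>i. cmod (y $ i)" "\<lambda>i. cmod (x $ i)"] in \<open>simp add: norm_mult\<close>)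

lemma vinner_smult_left: "dim_vec y = dim_vec x \<Longrightarrow> vinner (a \<cdot>\<^sub>v y) x = cnj a * vinner y x"
  by (simp add: vinner_def sum_distrib_left mult_ac)

lemma vinner_smult_right: "vinner y (a \<cdot>\<^sub>v x) = a * vinner y x"
  by (simp add: vinner_def sum_distrib_left mult_ac)

lemma vinner_add_right:
  "dim_vec u = dim_vec v \<Longrightarrow> vinner y (u + v) = vinner y u + vinner y v"
  by (simp add: vinner_def sum.distrib distrib_left)

lemma vinner_eq_cscalar_prod: "dim_vec x = dim_vec y \<Longrightarrow> vinner y x = x \<bullet>c y"
  by (simp add: vinner_def scalar_prod_def atLeast0LessThan mult.commute)

lemma index_mat_adjoint_mult_vec:
  fixes R :: "complex mat"
  assumes "i < dim_col R" "dim_vec y = dim_row R"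
  shows "(mat_adjoint R *\<^sub>v y) $ i = vinner (col R i) y"
  using assms by (simp add: vinner_def scalar_prod_def atLeast0LessThan)

lemma index_mat_adjoint_mult:
  fixes A B :: "complex mat"
  assumes "i < dim_col A" "j < dim_col B" "dim_row A = dim_row B"
  shows "(mat_adjoint A * B) $$ (i, j) = vinner (col A i) (col B j)"
  using assms by (simp add: vinner_def scalar_prod_def atLeast0LessThan)

lemma vinner_mult_mat_vec:
  assumes "A \<in> carrier_mat n m" "y \<in> carrier_vec n" "x \<in> carrier_vec m"
  shows "vinner y (A *\<^sub>v x) = vinner (mat_adjoint A *\<^sub>v y) x"
proof -
  have "vinner y (A *\<^sub>v x) = (\<Sum>i<n. \<Sum>j<m. cnj (y $ i) * A $$ (i, j) * x $ j)"
    using assms by (simp add: vinner_def scalar_prod_def atLeast0LessThan sum_distrib_left mult_ac)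
  also have "\<dots> = (\<Sum>j<m. \<Sum>i<n. cnj (y $ i) * A $$ (i, j) * x $ j)"
    by (rule sum.swap)
  also have "\<dots> = vinner (mat_adjoint A *\<^sub>v y) x"
    using assms by (simp add: vinner_def scalar_prod_def atLeast0LessThan sum_distrib_left sum_distrib_right mult_ac)
  finally show ?thesis .
qed

lemma vnorm_mult_isometry:
  assumes "U \<in> carrier_mat p q" "mat_adjoint U * U = 1\<^sub>m q" "v \<in> carrier_vec q"
  shows "vnorm (U *\<^sub>v v) = vnorm v"
proof -
  have "vinner (U *\<^sub>v v) (U *\<^sub>v v) = vinner (mat_adjoint U *\<^sub>v (U *\<^sub>v v)) v"
    using assms by (intro vinner_mult_mat_vec) auto
  also have "mat_adjoint U *\<^sub>v (U *\<^sub>v v) = v"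
    using assms by (simp flip: assoc_mult_mat_vec[of _ q p _ q])
  finally have "(vnorm (U *\<^sub>v v))\<^sup>2 = (vnorm v)\<^sup>2"
    by (simp only: vinner_self of_real_eq_iff)
  then show ?thesis
    by (simp add: power2_eq_iff_nonneg)
qed

section \<open>The spectral norm\<close>

lemma L2_set_sum_le:
  assumes "finite I"
  shows "L2_set (\<lambda>j. \<Sum>i\<in>I. f i j) A \<le> (\<Sum>i\<in>I. L2_set (f i) A)"
  using assms
proof (induction I rule: finite_induct)
  case (insert i I)
  then have "L2_set (\<lambda>j. \<Sum>i\<in>insert i I. f i j) A \<le>
      L2_set (f i) A + L2_set (\<lambda>j. \<Sum>i\<in>I. f i j) A"
    using L2_set_triangle_ineq[of "f i"] by simp
  with insert show ?case by simp
qed (simp add: L2_set_def)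

lemma vnorm_mult_mat_vec_le_sum_cols:
  assumes M: "M \<in> carrier_mat p q" and v: "v \<in> carrier_vec q"
  shows "vnorm (M *\<^sub>v v) \<le> (\<Sum>j<q. cmod (v $ j) * vnorm (col M j))"
proof -
  have "vnorm (M *\<^sub>v v) = L2_set (\<lambda>i. cmod (\<Sum>j<q. M $$ (i, j) * v $ j)) {..<p}"
    unfolding vnorm_eq_L2_set using M v by (auto simp: scalar_prod_def atLeast0LessThan intro: L2_set_cong)
  also have "\<dots> \<le> L2_set (\<lambda>i. \<Sum>j<q. cmod (v $ j) * cmod (M $$ (i, j))) {..<p}"
    by (intro L2_set_mono order_trans[OF norm_sum]) (auto simp: norm_mult mult.commute)
  also have "\<dots> \<le> (\<Sum>j<q. L2_set (\<lambda>i. cmod (v $ j) * cmod (M $$ (i, j))) {..<p})"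
    by (rule L2_set_sum_le) simp
  also have "\<dots> = (\<Sum>j<q. cmod (v $ j) * vnorm (col M j))"
    using M by (intro sum.cong) (auto simp: vnorm_eq_L2_set L2_set_right_distrib intro: L2_set_cong)
  finally show ?thesis .
qed

lemma bdd_above_spec_norm_set:
  assumes M: "M \<in> carrier_mat p q"
  shows "bdd_above {vnorm (M *\<^sub>v u) | u. u \<in> carrier_vec (dim_col M) \<and> vnorm u = 1}"
proof (rule bdd_aboveI)
  fix s assume "s \<in> {vnorm (M *\<^sub>v u) | u. u \<in> carrier_vec (dim_col M) \<and> vnorm u = 1}"
  then obtain u where u: "u \<in> carrier_vec q" "vnorm u = 1" and s: "s = vnorm (M *\<^sub>v u)"
    using M by blast
  have "vnorm (M *\<^sub>v u) \<le> (\<Sum>j<q. cmod (u $ j) * vnorm (col M j))"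
    by (rule vnorm_mult_mat_vec_le_sum_cols[OF M u(1)])
  also have "\<dots> \<le> (\<Sum>j<q. vnorm (col M j))"
  proof (rule sum_mono)
    fix j assume "j \<in> {..<q}"
    then have "cmod (u $ j) \<le> 1"
      using u norm_index_le_vnorm[of j u] by simp
    then show "cmod (u $ j) * vnorm (col M j) \<le> vnorm (col M j)"
      by (simp add: mult_left_le_one_le)
  qed
  finally show "s \<le> (\<Sum>j<q. vnorm (col M j))"
    using s by simp
qed

lemma vnorm_mult_mat_vec_le:
  assumes M: "M \<in> carrier_mat p q" and v: "v \<in> carrier_vec q"
  shows "vnorm (M *\<^sub>v v) \<le> spec_norm M * vnorm v"
proof (cases "v = 0\<^sub>v q")
  case True
  then have "M *\<^sub>v v = 0\<^sub>v p"
    using M by (intro eq_vecI) (simp_all add: scalar_prod_def)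
  then show ?thesis
    using True by (simp add: vnorm_def)
next
  case False
  then have nv: "vnorm v > 0"
    using vnorm_eq_0_iff[OF v] vnorm_nonneg[of v] by linarith
  define c where "c = complex_of_real (1 / vnorm v)"
  have "vnorm (c \<cdot>\<^sub>v v) = 1"
    using nv by (simp add: c_def vnorm_smult norm_divide)
  then have "vnorm (M *\<^sub>v (c \<cdot>\<^sub>v v)) \<in>
      {vnorm (M *\<^sub>v u) | u. u \<in> carrier_vec (dim_col M) \<and> vnorm u = 1}"
    using M v by (intro CollectI exI[of _ "c \<cdot>\<^sub>v v"]) simp
  then have "vnorm (M *\<^sub>v (c \<cdot>\<^sub>v v)) \<le> spec_norm M"
    unfolding spec_norm_def by (rule cSup_upper[OF _ bdd_above_spec_norm_set[OF M]])
  also have "M *\<^sub>v (c \<cdot>\<^sub>v v) = c \<cdot>\<^sub>v (M *\<^sub>v v)"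
    using M v by (rule mult_mat_vec)
  finally have "vnorm (M *\<^sub>v v) / vnorm v \<le> spec_norm M"
    using nv by (simp add: c_def vnorm_smult norm_divide)
  then show ?thesis
    using nv by (simp add: divide_le_eq mult.commute)
qed

lemma spec_norm_nonneg:
  assumes M: "M \<in> carrier_mat p q" and q: "0 < q"
  shows "0 \<le> spec_norm M"
proof -
  have "vnorm (M *\<^sub>v unit_vec q 0) \<le> spec_norm M * vnorm (unit_vec q 0)"
    using M by (rule vnorm_mult_mat_vec_le) simp
  then show ?thesis
    using vnorm_unit_vec[OF q] by (metis mult.right_neutral order_trans vnorm_nonneg)
qed

lemma vnorm_mat_adjoint_mult_le:
  assumes M: "M \<in> carrier_mat p q" "0 < q" and w: "w \<in> carrier_vec p"
  shows "vnorm (mat_adjoint M *\<^sub>v w) \<le> spec_norm M * vnorm w"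
proof -
  define u where "u = mat_adjoint M *\<^sub>v w"
  have u: "u \<in> carrier_vec q"
    using mult_mat_vec_carrier[OF mat_adjoint_carrier[OF M(1)] w] by (simp add: u_def)
  have "(vnorm u)\<^sup>2 = cmod (vinner u u)"
    by (simp add: vinner_self del: of_real_power)
  also have "vinner u u = vinner w (M *\<^sub>v u)"
    using vinner_mult_mat_vec[OF M(1) w u] by (simp add: u_def)
  also have "cmod \<dots> \<le> vnorm w * vnorm (M *\<^sub>v u)"
    using M w by (intro norm_vinner_le) auto
  also have "\<dots> \<le> vnorm w * (spec_norm M * vnorm u)"
    by (intro mult_left_mono vnorm_mult_mat_vec_le[OF M(1) u]) auto
  also have "\<dots> = (spec_norm M * vnorm w) * vnorm u"
    by (simp add: mult_ac)
  finally have *: "vnorm u * vnorm u \<le> (spec_norm M * vnorm w) * vnorm u"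
    by (simp only: power2_eq_square)
  show ?thesis
  proof (cases "vnorm u = 0")
    case True
    then show ?thesis
      using spec_norm_nonneg[OF M] by (simp add: u_def)
  next
    case False
    then have "0 < vnorm u"
      using vnorm_nonneg[of u] by linarith
    with * show ?thesis
      unfolding u_def by (rule mult_right_le_imp_le)
  qed
qed

section \<open>Unitary diagonalisation of Hermitian matrices\<close>

lemma unitary_matI:
  assumes "U \<in> carrier_mat n n" "mat_adjoint U * U = 1\<^sub>m n"
  shows "unitary_mat U"
  using assms mat_mult_left_right_inverse[of "mat_adjoint U" n U] by (simp add: unitary_mat_def)

lemma unitary_mat_mult:
  assumes U: "U \<in> carrier_mat n n" "unitary_mat U" and V: "V \<in> carrier_mat n n" "unitary_mat V"
  shows "unitary_mat (U * V)"
proof (rule unitary_matI)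
  have "mat_adjoint (U * V) * (U * V) = mat_adjoint V * (mat_adjoint U * (U * V))"
    using U V by (simp add: mat_adjoint_mult assoc_mult_mat[of _ n n _ n _ n])
  also have "mat_adjoint U * (U * V) = V"
    using U V by (simp add: unitary_mat_def flip: assoc_mult_mat[of _ n n _ n _ n])
  finally show "mat_adjoint (U * V) * (U * V) = 1\<^sub>m n"
    using V by (simp add: unitary_mat_def)
qed (use U V in simp)

lemma vinner_col_unitary_mat:
  assumes "U \<in> carrier_mat n n" "unitary_mat U" "i < n" "j < n"
  shows "vinner (col U i) (col U j) = (if i = j then 1 else 0)"
proof -
  have "vinner (col U i) (col U j) = (mat_adjoint U * U) $$ (i, j)"
    by (rule index_mat_adjoint_mult[symmetric]) (use assms in auto)
  also have "\<dots> = 1\<^sub>m n $$ (i, j)"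
    using assms by (simp add: unitary_mat_def)
  finally show ?thesis
    using assms by simp
qed

lemma unitary_mat_of_orthonormal_cols:
  assumes ws: "set ws \<subseteq> carrier_vec n" "length ws = n"
    and orth: "\<And>i j. i < n \<Longrightarrow> j < n \<Longrightarrow> vinner (ws ! i) (ws ! j) = (if i = j then 1 else 0)"
  shows "unitary_mat (mat_of_cols n ws)"
proof (rule unitary_matI)
  show "mat_adjoint (mat_of_cols n ws) * mat_of_cols n ws = 1\<^sub>m n"
  proof (rule eq_matI)
    fix i j assume "i < dim_row (1\<^sub>m n :: complex mat)" "j < dim_col (1\<^sub>m n :: complex mat)"
    then have ij: "i < n" "j < n"
      by auto
    have "(mat_adjoint (mat_of_cols n ws) * mat_of_cols n ws) $$ (i, j) =
        vinner (col (mat_of_cols n ws) i) (col (mat_of_cols n ws) j)"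
      by (rule index_mat_adjoint_mult) (use ws ij in auto)
    also have "\<dots> = 1\<^sub>m n $$ (i, j)"
      using ws ij orth by (simp add: col_mat_of_cols subsetD)
    finally show "(mat_adjoint (mat_of_cols n ws) * mat_of_cols n ws) $$ (i, j) = 1\<^sub>m n $$ (i, j)" .
  qed (use ws in simp_all)
qed (use mat_of_cols_carrier(1)[of n ws] ws in simp)

lemma unitary_mat_of_corthogonal_cols:
  assumes ws: "corthogonal ws" "set ws \<subseteq> carrier_vec n" "length ws = n"
  shows "unitary_mat (mat_of_cols n (map (\<lambda>w. complex_of_real (1 / vnorm w) \<cdot>\<^sub>v w) ws))"
proof (rule unitary_mat_of_orthonormal_cols)
  have wsi: "ws ! i \<in> carrier_vec n" if "i < n" for i
    using ws that by auto
  have nz: "vnorm (ws ! i) \<noteq> 0" if "i < n" for i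
  proof
    assume "vnorm (ws ! i) = 0"
    then have "ws ! i \<bullet>c ws ! i = 0"
      using wsi[OF that] by (simp add: vnorm_eq_0_iff)
    then show False
      using corthogonalD[OF ws(1), of i i] that ws(3) by simp
  qed
  fix i j assume ij: "i < n" "j < n"
  have dims: "dim_vec (ws ! i) = dim_vec (ws ! j)"
    using wsi[OF ij(1)] wsi[OF ij(2)] by simp
  let ?ws' = "map (\<lambda>w. complex_of_real (1 / vnorm w) \<cdot>\<^sub>v w) ws"
  have "vinner (?ws' ! i) (?ws' ! j) = vinner (ws ! i) (ws ! j) / (vnorm (ws ! i) * vnorm (ws ! j))"
    using ij ws(3) by (simp add: vinner_smult_left[OF dims] vinner_smult_right del: of_real_divide)
      (simp add: divide_inverse mult_ac)
  also have "vinner (ws ! i) (ws ! j) = ws ! j \<bullet>c ws ! i"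
    using dims by (simp add: vinner_eq_cscalar_prod)
  finally show "vinner (?ws' ! i) (?ws' ! j) = (if i = j then 1 else 0)"
    using corthogonalD[OF ws(1), of j i] ij ws(3) nz[OF ij(1)]
    by (auto simp: vinner_eq_cscalar_prod[symmetric] vinner_self power2_eq_square)
qed (use ws in \<open>auto simp: in_set_conv_nth\<close>)

lemma unitary_mat_with_first_col:
  assumes v: "v \<in> carrier_vec n" and nv: "vnorm v = 1"
  obtains W where "W \<in> carrier_mat n n" "unitary_mat W" "col W 0 = v"
proof -
  interpret cof_vec_space n "TYPE(complex)" .
  have v0: "v \<noteq> 0\<^sub>v n"
    using nv by (auto simp: vnorm_def)
  then have n: "0 < n"
    using v by (cases n) auto
  define b where "b = basis_completion v"
  note b = basis_completion[OF v v0, folded b_def]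
  then obtain vs where bv: "b = v # vs"
    using n by (cases b) auto
  define ws where "ws = gram_schmidt n b"
  note ws = gram_schmidt_result[OF b(2) b(4) b(5) ws_def]
  have wsn: "length ws = n"
    using ws(4) b(6) by simp
  have "ws ! 0 = v"
    using gram_schmidt_hd[OF v, of vs] wsn n by (cases ws) (auto simp: ws_def bv)
  define W where "W = mat_of_cols n (map (\<lambda>w. complex_of_real (1 / vnorm w) \<cdot>\<^sub>v w) ws)"
  show ?thesis
  proof
    show "W \<in> carrier_mat n n"
      unfolding W_def by (metis mat_of_cols_carrier(1) length_map wsn)
    show "unitary_mat W"
      unfolding W_def using ws(2,3) wsn by (rule unitary_mat_of_corthogonal_cols)
    show "col W 0 = v"
      using n wsn ws(3) \<open>ws ! 0 = v\<close> nv by (subst W_def, subst col_mat_of_cols) auto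
  qed
qed

lemma mult_block_diag_mat:
  fixes A D A' D' :: "complex mat"
  assumes A: "A \<in> carrier_mat a b" and D: "D \<in> carrier_mat d e"
    and A': "A' \<in> carrier_mat b c" and D': "D' \<in> carrier_mat e f"
  shows "four_block_mat A (0\<^sub>m a e) (0\<^sub>m d b) D * four_block_mat A' (0\<^sub>m b f) (0\<^sub>m e c) D' =
    four_block_mat (A * A') (0\<^sub>m a f) (0\<^sub>m d c) (D * D')"
  by (subst mult_four_block_mat[OF A zero_carrier_mat zero_carrier_mat D A' zero_carrier_mat zero_carrier_mat D'])
    (use A D A' D' in simp)

lemma unitary_block_diag_mat:
  assumes A: "A \<in> carrier_mat a a" "unitary_mat A" and D: "D \<in> carrier_mat d d" "unitary_mat D"
  shows "unitary_mat (four_block_mat A (0\<^sub>m a d) (0\<^sub>m d a) D)"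
proof (rule unitary_matI)
  show "four_block_mat A (0\<^sub>m a d) (0\<^sub>m d a) D \<in> carrier_mat (a + d) (a + d)"
    using A D by simp
  let ?F = "four_block_mat A (0\<^sub>m a d) (0\<^sub>m d a) D"
  have "mat_adjoint ?F * ?F = four_block_mat (mat_adjoint A * A) (0\<^sub>m a d) (0\<^sub>m d a) (mat_adjoint D * D)"
    using A D by (simp add: mat_adjoint_four_block_mat[of _ a a _ d _ d] mult_block_diag_mat)
  then show "mat_adjoint ?F * ?F = 1\<^sub>m (a + d)"
    using A D by (simp add: unitary_mat_def)
qed

lemma diagonal_block_diag_mat:
  assumes "A \<in> carrier_mat a a" "diagonal_mat A" "D \<in> carrier_mat d d" "diagonal_mat D"
  shows "diagonal_mat (four_block_mat A (0\<^sub>m a d) (0\<^sub>m d a) D)"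
  using assms unfolding diagonal_mat_def by auto

lemma mat_adjoint_mult_congruence:
  fixes M W V :: "complex mat"
  assumes M: "M \<in> carrier_mat n n" and W: "W \<in> carrier_mat n k" and V: "V \<in> carrier_mat k k"
  shows "mat_adjoint (W * V) * M * (W * V) = mat_adjoint V * (mat_adjoint W * M * W) * V"
proof -
  define B where "B = mat_adjoint W * M"
  have B: "B \<in> carrier_mat k n" and BW: "B * W \<in> carrier_mat k k"
    using M W by (simp_all add: B_def mult_carrier_mat[of _ k n])
  have "mat_adjoint (W * V) * M * (W * V) = mat_adjoint V * B * (W * V)"
    using M W V by (simp add: B_def mat_adjoint_mult assoc_mult_mat[of "mat_adjoint V" k k _ n _ n])
  also have "\<dots> = mat_adjoint V * (B * (W * V))"
    using B W V by (intro assoc_mult_mat[of _ k k _ n _ k]) auto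
  also have "B * (W * V) = B * W * V"
    using B W V by (rule assoc_mult_mat[symmetric])
  also have "mat_adjoint V * (B * W * V) = mat_adjoint V * (B * W) * V"
    using BW V by (intro assoc_mult_mat[symmetric, of _ k k _ k _ k]) auto
  finally show ?thesis
    by (simp add: B_def)
qed

lemma unit_eigenvector_exists:
  fixes M :: "complex mat"
  assumes M: "M \<in> carrier_mat n n" and n: "0 < n"
  obtains v e where "v \<in> carrier_vec n" "vnorm v = 1" "M *\<^sub>v v = e \<cdot>\<^sub>v v"
proof -
  obtain e where "eigenvalue M e"
    using spectrum_non_empty[OF M n] by (auto simp: spectrum_def)
  then obtain u where u: "u \<in> carrier_vec n" "u \<noteq> 0\<^sub>v n" "M *\<^sub>v u = e \<cdot>\<^sub>v u"
    using M by (auto simp: eigenvalue_def eigenvector_def)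
  define c where "c = complex_of_real (1 / vnorm u)"
  have "vnorm u \<noteq> 0"
    using u vnorm_eq_0_iff by blast
  then have "vnorm (c \<cdot>\<^sub>v u) = 1"
    by (simp add: c_def vnorm_smult norm_divide)
  moreover have "M *\<^sub>v (c \<cdot>\<^sub>v u) = e \<cdot>\<^sub>v (c \<cdot>\<^sub>v u)"
    using M u by (simp add: mult_mat_vec smult_smult_assoc mult.commute)
  ultimately show ?thesis
    using u by (intro that[of "c \<cdot>\<^sub>v u"]) auto
qed

lemma index_congruence_first_col:
  fixes M W :: "complex mat"
  assumes M: "M \<in> carrier_mat n n" and W: "W \<in> carrier_mat n n" "unitary_mat W"
    and eig: "M *\<^sub>v col W 0 = e \<cdot>\<^sub>v col W 0" and i: "i < n"
  shows "(mat_adjoint W * M * W) $$ (i, 0) = (if i = 0 then e else 0)"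
proof -
  have "(mat_adjoint W * M * W) $$ (i, 0) = (mat_adjoint W * (M * W)) $$ (i, 0)"
    using M W by (simp add: assoc_mult_mat[of _ n n _ n _ n])
  also have "\<dots> = vinner (col W i) (col (M * W) 0)"
    by (rule index_mat_adjoint_mult) (use M W i in auto)
  also have "col (M * W) 0 = e \<cdot>\<^sub>v col W 0"
    using col_mult2[OF M W(1), of 0] eig i by simp
  finally show ?thesis
    using vinner_col_unitary_mat[OF W i, of 0] i by (simp add: vinner_smult_right)
qed

lemma hermitian_mat_first_col_block:
  fixes B :: "complex mat"
  assumes B: "B \<in> carrier_mat (Suc m) (Suc m)" "hermitian_mat B"
    and col0: "\<And>i. i < Suc m \<Longrightarrow> B $$ (i, 0) = (if i = 0 then e else 0)"
  obtains M' where "M' \<in> carrier_mat m m" "hermitian_mat M'"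
    "B = four_block_mat (mat 1 1 (\<lambda>_. e)) (0\<^sub>m 1 m) (0\<^sub>m m 1) M'"
proof
  have hB: "mat_adjoint B = B"
    using B(2) by (simp add: hermitian_mat_def)
  have row0: "B $$ (0, j) = 0" if j: "0 < j" "j < Suc m" for j
  proof -
    have "B $$ (0, j) = cnj (B $$ (j, 0))"
      using B j by (subst hB[symmetric]) simp
    then show ?thesis
      using col0[OF j(2)] j by simp
  qed
  define M' where "M' = mat m m (\<lambda>(i, j). B $$ (Suc i, Suc j))"
  show "M' \<in> carrier_mat m m"
    by (simp add: M'_def)
  show "hermitian_mat M'"
    unfolding hermitian_mat_def
  proof (rule eq_matI)
    fix i j assume "i < dim_row M'" "j < dim_col M'"
    then show "mat_adjoint M' $$ (i, j) = M' $$ (i, j)"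
      using B by (simp add: M'_def) (metis hB index_mat_adjoint Suc_less_eq carrier_matD)
  qed (simp_all add: M'_def)
  show "B = four_block_mat (mat 1 1 (\<lambda>_. e)) (0\<^sub>m 1 m) (0\<^sub>m m 1) M'"
  proof (rule eq_matI)
    fix i j assume "i < dim_row (four_block_mat (mat 1 1 (\<lambda>_. e)) (0\<^sub>m 1 m) (0\<^sub>m m 1) M')"
      "j < dim_col (four_block_mat (mat 1 1 (\<lambda>_. e)) (0\<^sub>m 1 m) (0\<^sub>m m 1) M')"
    then have "i < Suc m" "j < Suc m"
      by (simp_all add: M'_def)
    then show "B $$ (i, j) = four_block_mat (mat 1 1 (\<lambda>_. e)) (0\<^sub>m 1 m) (0\<^sub>m m 1) M' $$ (i, j)"
      using col0 row0 by (cases i; cases j) (simp_all add: M'_def)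
  qed (use B in \<open>simp_all add: M'_def\<close>)
qed

theorem hermitian_mat_unitarily_diagonalizable:
  assumes "M \<in> carrier_mat n n" "hermitian_mat M"
  obtains U where "U \<in> carrier_mat n n" "unitary_mat U" "diagonal_mat (mat_adjoint U * M * U)"
  using assms
proof (induction n arbitrary: M thesis)
  case 0
  show ?case
    by (rule "0.prems"(1)[of "1\<^sub>m 0"]) (use "0.prems" in \<open>auto simp: unitary_mat_def diagonal_mat_def\<close>)
next
  case (Suc m)
  obtain v e where v: "v \<in> carrier_vec (Suc m)" "vnorm v = 1" "M *\<^sub>v v = e \<cdot>\<^sub>v v"
    using unit_eigenvector_exists[OF Suc.prems(2)] by blast
  obtain W where W: "W \<in> carrier_mat (Suc m) (Suc m)" "unitary_mat W" "col W 0 = v"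
    using unitary_mat_with_first_col[OF v(1,2)] by blast
  have B: "mat_adjoint W * M * W \<in> carrier_mat (Suc m) (Suc m)"
    using Suc.prems(2) W by (simp add: mult_carrier_mat[of _ "Suc m" "Suc m"])
  have "M *\<^sub>v col W 0 = e \<cdot>\<^sub>v col W 0"
    using v(3) W(3) by simp
  then obtain M' where M': "M' \<in> carrier_mat m m" "hermitian_mat M'"
    and WMW: "mat_adjoint W * M * W = four_block_mat (mat 1 1 (\<lambda>_. e)) (0\<^sub>m 1 m) (0\<^sub>m m 1) M'"
    using hermitian_mat_first_col_block[OF B hermitian_mat_congruence[OF Suc.prems(2,3) W(1)]]
      index_congruence_first_col[OF Suc.prems(2) W(1,2)] by blast
  obtain U' where U': "U' \<in> carrier_mat m m" "unitary_mat U'" "diagonal_mat (mat_adjoint U' * M' * U')"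
    using Suc.IH[OF _ M'] by blast
  define V where "V = four_block_mat (1\<^sub>m 1) (0\<^sub>m 1 m) (0\<^sub>m m 1) U'"
  have V: "V \<in> carrier_mat (Suc m) (Suc m)" "unitary_mat V"
    using U' unitary_block_diag_mat[of "1\<^sub>m 1" 1 U' m] by (auto simp: V_def unitary_mat_def)
  have "mat_adjoint (W * V) * M * (W * V) = mat_adjoint V * (mat_adjoint W * M * W) * V"
    using Suc.prems(2) W V by (intro mat_adjoint_mult_congruence)
  also have "\<dots> = four_block_mat (mat 1 1 (\<lambda>_. e)) (0\<^sub>m 1 m) (0\<^sub>m m 1) (mat_adjoint U' * M' * U')"
    using U' M' by (simp add: WMW V_def mat_adjoint_four_block_mat[of _ 1 1 _ m _ m] mult_block_diag_mat
        mult_carrier_mat[of _ m m])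
  finally show ?case
    using W V U' M' by (intro Suc.prems(1)[of "W * V"] unitary_mat_mult diagonal_block_diag_mat)
      (auto simp: diagonal_mat_def)
qed

lemma unitary_mat_mult_congruence:
  fixes M U :: "complex mat"
  assumes M: "M \<in> carrier_mat n n" and U: "U \<in> carrier_mat n n" "unitary_mat U"
  shows "U * (mat_adjoint U * M * U) = M * U"
proof -
  have "U * (mat_adjoint U * M * U) = (U * mat_adjoint U) * (M * U)"
    using M U by (simp add: assoc_mult_mat[of _ n n _ n _ n] mult_carrier_mat[of _ n n])
  then show ?thesis
    using M U by (simp add: unitary_mat_def)
qed

lemma eigenvalue_unitary_diagonalization:
  fixes M U :: "complex mat"
  assumes M: "M \<in> carrier_mat n n" and U: "U \<in> carrier_mat n n" "unitary_mat U"
    and diag: "diagonal_mat (mat_adjoint U * M * U)" and i: "i < n"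
  shows "eigenvalue M ((mat_adjoint U * M * U) $$ (i, i))"
proof -
  define D where "D = mat_adjoint U * M * U"
  have D: "D \<in> carrier_mat n n"
    using M U by (simp add: D_def mult_carrier_mat[of _ n n])
  have colD: "col D i = D $$ (i, i) \<cdot>\<^sub>v unit_vec n i"
    using D diag i by (intro eq_vecI) (auto simp: D_def diagonal_mat_def)
  have "M *\<^sub>v col U i = col (M * U) i"
    using col_mult2[OF M U(1) i] by simp
  also have "\<dots> = col (U * D) i"
    using unitary_mat_mult_congruence[OF M U] by (simp add: D_def)
  also have "\<dots> = U *\<^sub>v col D i"
    by (rule col_mult2[OF U(1) D i])
  also have "\<dots> = D $$ (i, i) \<cdot>\<^sub>v (U *\<^sub>v unit_vec n i)"
    using U by (simp add: colD mult_mat_vec)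
  also have "U *\<^sub>v unit_vec n i = col U i"
    using col_mult2[OF U(1) one_carrier_mat i] U i by simp
  finally have ev: "M *\<^sub>v col U i = D $$ (i, i) \<cdot>\<^sub>v col U i" .
  have "col U i \<noteq> 0\<^sub>v n"
    using vinner_col_unitary_mat[OF U i i] carrier_matD(1)[OF U(1)] by (auto simp: vinner_def)
  with ev M U show ?thesis
    unfolding eigenvalue_def eigenvector_def D_def by (intro exI[of _ "col U i"]) auto
qed

lemma vnorm_diagonal_shift_ge:
  fixes D :: "complex mat"
  assumes D: "D \<in> carrier_mat n n" "diagonal_mat D" and w: "w \<in> carrier_vec n"
    and g: "0 \<le> g" "\<And>i. i < n \<Longrightarrow> g \<le> cmod (l - D $$ (i, i))"
  shows "g * vnorm w \<le> vnorm (l \<cdot>\<^sub>v w - D *\<^sub>v w)"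
proof -
  have Dw: "(D *\<^sub>v w) $ i = D $$ (i, i) * w $ i" if i: "i < n" for i
  proof -
    have "(D *\<^sub>v w) $ i = (\<Sum>j<n. D $$ (i, j) * w $ j)"
      using D w i by (simp add: scalar_prod_def atLeast0LessThan)
    also have "\<dots> = (\<Sum>j<n. if j = i then D $$ (i, i) * w $ i else 0)"
      using D i by (intro sum.cong) (auto simp: diagonal_mat_def)
    finally show ?thesis
      using i by simp
  qed
  have "(g * vnorm w)\<^sup>2 = (\<Sum>i<n. g\<^sup>2 * (cmod (w $ i))\<^sup>2)"
    using w by (simp add: power_mult_distrib power2_vnorm sum_distrib_left)
  also have "\<dots> \<le> (\<Sum>i<n. (cmod (l - D $$ (i, i)))\<^sup>2 * (cmod (w $ i))\<^sup>2)"
    using g by (intro sum_mono mult_right_mono power_mono) auto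
  also have "\<dots> = (vnorm (l \<cdot>\<^sub>v w - D *\<^sub>v w))\<^sup>2"
    unfolding power2_vnorm using D w Dw
    by (intro sum.cong) (auto simp: left_diff_distrib[symmetric] norm_mult power_mult_distrib)
  finally show ?thesis
    by (rule power2_le_imp_le) simp
qed

theorem spec_dist_mult_vnorm_le:
  assumes M: "M \<in> carrier_mat n n" "hermitian_mat M" and y: "y \<in> carrier_vec n"
  shows "spec_dist l M * ereal (vnorm y) \<le> ereal (vnorm (l \<cdot>\<^sub>v y - M *\<^sub>v y))"
proof (cases "n = 0")
  case True
  then have "vnorm y = 0"
    using y by (simp add: vnorm_def)
  then show ?thesis
    by (simp add: zero_ereal_def[symmetric])
next
  case False
  obtain U where U: "U \<in> carrier_mat n n" "unitary_mat U" and diag: "diagonal_mat (mat_adjoint U * M * U)"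
    using hermitian_mat_unitarily_diagonalizable[OF M] by blast
  define D where "D = mat_adjoint U * M * U"
  have D: "D \<in> carrier_mat n n"
    using M U by (simp add: D_def mult_carrier_mat[of _ n n])
  have le: "spec_dist l M \<le> ereal (cmod (l - D $$ (i, i)))" if "i < n" for i
    unfolding spec_dist_def D_def
    by (rule INF_lower2) (use eigenvalue_unitary_diagonalization[OF M(1) U diag that] in auto)
  have "0 \<le> spec_dist l M"
    unfolding spec_dist_def by (intro INF_greatest) simp
  then obtain g where g: "spec_dist l M = ereal g" "0 \<le> g"
    using le[of 0] False by (cases "spec_dist l M") auto
  define w where "w = mat_adjoint U *\<^sub>v y"
  have w: "w \<in> carrier_vec n"
    using mult_mat_vec_carrier[OF mat_adjoint_carrier[OF U(1)] y] by (simp add: w_def)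
  have "U *\<^sub>v w = y"
    using U y by (simp add: w_def unitary_mat_def flip: assoc_mult_mat_vec[of _ n n _ n])
  then have "l \<cdot>\<^sub>v y - M *\<^sub>v y = U *\<^sub>v (l \<cdot>\<^sub>v w - D *\<^sub>v w)"
    using unitary_mat_mult_congruence[OF M(1) U] M U D w
    by (auto simp: D_def mult_minus_distrib_mat_vec mult_mat_vec simp flip: assoc_mult_mat_vec[of _ n n _ n])
  moreover have "vnorm w = vnorm y"
    using U y by (simp add: w_def unitary_mat_def vnorm_mult_isometry[of _ n n])
  moreover have "g * vnorm w \<le> vnorm (l \<cdot>\<^sub>v w - D *\<^sub>v w)"
    using D diag w g le by (intro vnorm_diagonal_shift_ge) (auto simp: D_def)
  ultimately show ?thesis
    using U D w g by (simp add: unitary_mat_def vnorm_mult_isometry[of _ n n])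
qed

section \<open>Eigenvectors seen through a Rayleigh--Ritz basis\<close>

lemma hcat_mult_mat_adjoint:
  fixes P S :: "complex mat"
  assumes P: "P \<in> carrier_mat n a" and S: "S \<in> carrier_mat n b"
  shows "hcat P S * mat_adjoint (hcat P S) = P * mat_adjoint P + S * mat_adjoint S"
proof (rule eq_matI)
  let ?H = "hcat P S"
  fix i j assume "i < dim_row (P * mat_adjoint P + S * mat_adjoint S)"
    "j < dim_col (P * mat_adjoint P + S * mat_adjoint S)"
  then have i: "i < n" and j: "j < n"
    using P S by auto
  have H: "?H \<in> carrier_mat n (a + b)"
    using P S by (auto simp: hcat_def)
  have "(?H * mat_adjoint ?H) $$ (i, j) = (\<Sum>t\<in>{0..<a + b}. ?H $$ (i, t) * cnj (?H $$ (j, t)))"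
    using H i j by (simp add: scalar_prod_def)
  also have "\<dots> = (\<Sum>t\<in>{0..<a}. ?H $$ (i, t) * cnj (?H $$ (j, t))) +
      (\<Sum>t\<in>{a..<a + b}. ?H $$ (i, t) * cnj (?H $$ (j, t)))"
    by (rule sum.atLeastLessThan_concat[symmetric]) auto
  also have "(\<Sum>t\<in>{0..<a}. ?H $$ (i, t) * cnj (?H $$ (j, t))) =
      (\<Sum>t\<in>{0..<a}. P $$ (i, t) * cnj (P $$ (j, t)))"
    using P S i j by (intro sum.cong) (auto simp: hcat_def)
  also have "(\<Sum>t\<in>{a..<a + b}. ?H $$ (i, t) * cnj (?H $$ (j, t))) =
      (\<Sum>t\<in>{0..<b}. ?H $$ (i, t + a) * cnj (?H $$ (j, t + a)))"
    using sum.shift_bounds_nat_ivl[of "\<lambda>t. ?H $$ (i, t) * cnj (?H $$ (j, t))" 0 a b] by (simp add: add.commute)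
  also have "\<dots> = (\<Sum>t\<in>{0..<b}. S $$ (i, t) * cnj (S $$ (j, t)))"
    using P S i j by (intro sum.cong) (auto simp: hcat_def)
  finally show "(?H * mat_adjoint ?H) $$ (i, j) = (P * mat_adjoint P + S * mat_adjoint S) $$ (i, j)"
    using P S i j by (simp add: scalar_prod_def)
qed (use P S in \<open>auto simp: hcat_def\<close>)

lemma mult_unitary_mat_adjoint:
  fixes Q \<Omega> :: "complex mat"
  assumes Q: "Q \<in> carrier_mat n k" and \<Omega>: "\<Omega> \<in> carrier_mat k k" "unitary_mat \<Omega>"
  shows "Q * \<Omega> * mat_adjoint (Q * \<Omega>) = Q * mat_adjoint Q"
proof -
  have "Q * \<Omega> * mat_adjoint (Q * \<Omega>) = Q * \<Omega> * (mat_adjoint \<Omega> * mat_adjoint Q)"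
    using Q \<Omega> by (simp add: mat_adjoint_mult)
  also have "\<dots> = Q * (\<Omega> * (mat_adjoint \<Omega> * mat_adjoint Q))"
    by (rule assoc_mult_mat[of _ n k _ k _ n]) (use Q \<Omega> in \<open>simp_all add: mult_carrier_mat[of _ k k]\<close>)
  also have "\<Omega> * (mat_adjoint \<Omega> * mat_adjoint Q) = mat_adjoint Q"
    using Q \<Omega> by (simp add: unitary_mat_def flip: assoc_mult_mat[of \<Omega> k k _ k _ n])
  finally show ?thesis .
qed

lemma unitary_mat_conj_cancel:
  fixes U B :: "complex mat"
  assumes U: "U \<in> carrier_mat k k" "unitary_mat U" and B: "B \<in> carrier_mat k k"
  shows "mat_adjoint U * (U * B * mat_adjoint U) * U = B"
proof -
  have "mat_adjoint U * (U * B * mat_adjoint U) * U = (mat_adjoint U * U) * B * (mat_adjoint U * U)"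
    using U B by (simp add: assoc_mult_mat[of _ k k _ k _ k] mult_carrier_mat[of _ k k])
  then show ?thesis
    using U B by (simp add: unitary_mat_def)
qed

lemma rayleigh_ritz_basis:
  fixes A Q \<Omega> Qp :: "complex mat"
  assumes A: "A \<in> carrier_mat n n" and Q: "Q \<in> carrier_mat n k"
    and Om: "\<Omega> \<in> carrier_mat k k" "unitary_mat \<Omega>"
    and decomp: "mat_adjoint Q * A * Q = \<Omega> * diag_of k lh * mat_adjoint \<Omega>"
    and Qp: "Qp \<in> carrier_mat n m" "unitary_mat (hcat Q Qp)"
  shows "Q * \<Omega> * mat_adjoint (Q * \<Omega>) + Qp * mat_adjoint Qp = 1\<^sub>m n"
    and "mat_adjoint (Q * \<Omega>) * A * (Q * \<Omega>) = diag_of k lh"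
proof -
  show "Q * \<Omega> * mat_adjoint (Q * \<Omega>) + Qp * mat_adjoint Qp = 1\<^sub>m n"
    using hcat_mult_mat_adjoint[OF Q Qp(1)] Qp(2) Q
    by (simp add: mult_unitary_mat_adjoint[OF Q Om] unitary_mat_def hcat_def)
  show "mat_adjoint (Q * \<Omega>) * A * (Q * \<Omega>) = diag_of k lh"
    using A Q Om unitary_mat_conj_cancel[OF Om, of "diag_of k lh"]
    by (simp add: mat_adjoint_mult_congruence decomp diag_of_def)
qed

lemma assoc_mult_mat_vec3:
  assumes "A \<in> carrier_mat n1 n2" "B \<in> carrier_mat n2 n3" "C \<in> carrier_mat n3 n4" "v \<in> carrier_vec n4"
  shows "(A * B * C) *\<^sub>v v = A *\<^sub>v (B *\<^sub>v (C *\<^sub>v v))"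
  by (subst assoc_mult_mat_vec[OF mult_carrier_mat[OF assms(1,2)] assms(3,4)])
    (use assms in \<open>simp add: assoc_mult_mat_vec[of _ n1 n2 _ n3]\<close>)

lemma resolution_mult_vec:
  assumes X: "X \<in> carrier_mat n k" and P: "P \<in> carrier_mat n m"
    and res: "X * mat_adjoint X + P * mat_adjoint P = 1\<^sub>m n" and x: "x \<in> carrier_vec n"
  shows "x = X *\<^sub>v (mat_adjoint X *\<^sub>v x) + P *\<^sub>v (mat_adjoint P *\<^sub>v x)"
proof -
  have "x = (X * mat_adjoint X + P * mat_adjoint P) *\<^sub>v x"
    using res x by simp
  also have "\<dots> = (X * mat_adjoint X) *\<^sub>v x + (P * mat_adjoint P) *\<^sub>v x"
    using X P x by (intro add_mult_distrib_mat_vec[of _ n n]) auto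
  finally show ?thesis
    using X P x by (simp add: assoc_mult_mat_vec[of _ n k _ n] assoc_mult_mat_vec[of _ n m _ n])
qed

lemma power2_vnorm_resolution:
  assumes X: "X \<in> carrier_mat n k" and P: "P \<in> carrier_mat n m"
    and res: "X * mat_adjoint X + P * mat_adjoint P = 1\<^sub>m n" and x: "x \<in> carrier_vec n"
  shows "(vnorm x)\<^sup>2 = (vnorm (mat_adjoint X *\<^sub>v x))\<^sup>2 + (vnorm (mat_adjoint P *\<^sub>v x))\<^sup>2"
proof -
  have "vinner x x = vinner x (X *\<^sub>v (mat_adjoint X *\<^sub>v x)) + vinner x (P *\<^sub>v (mat_adjoint P *\<^sub>v x))"
    using X P x by (subst resolution_mult_vec[OF X P res x]) (simp add: vinner_add_right)
  also have "\<dots> = vinner (mat_adjoint X *\<^sub>v x) (mat_adjoint X *\<^sub>v x) +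
      vinner (mat_adjoint P *\<^sub>v x) (mat_adjoint P *\<^sub>v x)"
    using vinner_mult_mat_vec[OF X x mult_mat_vec_carrier[OF mat_adjoint_carrier[OF X] x]]
      vinner_mult_mat_vec[OF P x mult_mat_vec_carrier[OF mat_adjoint_carrier[OF P] x]] by simp
  finally show ?thesis
    by (simp only: vinner_self of_real_add[symmetric] of_real_eq_iff)
qed

lemma index_diag_of_mult_vec: "z \<in> carrier_vec k \<Longrightarrow> i < k \<Longrightarrow> (diag_of k d *\<^sub>v z) $ i = d i * z $ i"
  by (simp add: diag_of_def scalar_prod_def if_distrib[of "\<lambda>a. a * _"] cong: if_cong)

theorem eigenvector_ritz_equations:
  fixes A X P :: "complex mat"
  assumes A: "A \<in> carrier_mat n n" "hermitian_mat A"
    and X: "X \<in> carrier_mat n k" and P: "P \<in> carrier_mat n m"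
    and res: "X * mat_adjoint X + P * mat_adjoint P = 1\<^sub>m n"
    and ritz: "mat_adjoint X * A * X = diag_of k lh"
    and x: "x \<in> carrier_vec n" "A *\<^sub>v x = l \<cdot>\<^sub>v x"
  defines "z \<equiv> mat_adjoint X *\<^sub>v x" and "y \<equiv> mat_adjoint P *\<^sub>v x" and "R \<equiv> mat_adjoint P * A * X"
  shows "i < k \<Longrightarrow> (l - lh i) * z $ i = vinner (col R i) y"
    and "l \<cdot>\<^sub>v y - (mat_adjoint P * A * P) *\<^sub>v y = R *\<^sub>v z"
proof -
  have z: "z \<in> carrier_vec k" and y: "y \<in> carrier_vec m"
    using mult_mat_vec_carrier[OF mat_adjoint_carrier[OF X] x(1)] mult_mat_vec_carrier[OF mat_adjoint_carrier[OF P] x(1)]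
    by (simp_all add: z_def y_def)
  have "A *\<^sub>v x = A *\<^sub>v (X *\<^sub>v z) + A *\<^sub>v (P *\<^sub>v y)"
    using A X P z y by (subst resolution_mult_vec[OF X P res x(1)]) (simp add: z_def y_def mult_add_distrib_mat_vec)
  then have proj_Ax: "B *\<^sub>v (A *\<^sub>v x) = (B * A * X) *\<^sub>v z + (B * A * P) *\<^sub>v y"
    if B: "B \<in> carrier_mat q n" for B q
    unfolding assoc_mult_mat_vec3[OF B A(1) X z] assoc_mult_mat_vec3[OF B A(1) P y]
    using A X P z y B by (simp add: mult_add_distrib_mat_vec[of B q n])
  have proj_eig: "B *\<^sub>v (A *\<^sub>v x) = l \<cdot>\<^sub>v (B *\<^sub>v x)" if B: "B \<in> carrier_mat q n" for B q
    using B x by (simp add: mult_mat_vec)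
  show "(l - lh i) * z $ i = vinner (col R i) y" if i: "i < k"
  proof -
    have "l \<cdot>\<^sub>v z = diag_of k lh *\<^sub>v z + mat_adjoint R *\<^sub>v y"
      using proj_Ax[OF mat_adjoint_carrier[OF X]] proj_eig[OF mat_adjoint_carrier[OF X]]
      by (simp add: z_def ritz R_def mat_adjoint_sandwich[OF A P X])
    then have "(l \<cdot>\<^sub>v z) $ i = (diag_of k lh *\<^sub>v z + mat_adjoint R *\<^sub>v y) $ i"
      by simp
    then have "l * z $ i = lh i * z $ i + (mat_adjoint R *\<^sub>v y) $ i"
      using z i carrier_matD(2)[OF X] by (simp add: index_diag_of_mult_vec R_def)
    moreover have "(mat_adjoint R *\<^sub>v y) $ i = vinner (col R i) y"
      using A X P y i by (intro index_mat_adjoint_mult_vec) (auto simp: R_def)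
    ultimately show ?thesis
      by (simp add: algebra_simps)
  qed
  have "l \<cdot>\<^sub>v y = R *\<^sub>v z + (mat_adjoint P * A * P) *\<^sub>v y"
    using proj_Ax[OF mat_adjoint_carrier[OF P]] proj_eig[OF mat_adjoint_carrier[OF P]] by (simp add: y_def R_def)
  then show "l \<cdot>\<^sub>v y - (mat_adjoint P * A * P) *\<^sub>v y = R *\<^sub>v z"
    using A X P y z by (intro eq_vecI) (auto simp: R_def dest: arg_cong[where f = "\<lambda>v. v $ _"])
qed

definition tail_cols :: "'a mat \<Rightarrow> 'a mat" where
  "tail_cols R = mat (dim_row R) (dim_col R - 1) (\<lambda>(i, j). R $$ (i, Suc j))"

lemma tail_cols_carrier: "R \<in> carrier_mat m k \<Longrightarrow> tail_cols R \<in> carrier_mat m (k - 1)"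
  by (simp add: tail_cols_def)

lemma col_tail_cols: "R \<in> carrier_mat m k \<Longrightarrow> j < k - 1 \<Longrightarrow> col (tail_cols R) j = col R (Suc j)"
  by (intro eq_vecI) (auto simp: tail_cols_def)

lemma index_vec_last_tail: "z \<in> carrier_vec k \<Longrightarrow> j < k - 1 \<Longrightarrow> vec_last z (k - 1) $ j = z $ Suc j"
  by (simp add: vec_last_def)

lemma mult_mat_vec_split_first_col:
  fixes R :: "complex mat"
  assumes R: "R \<in> carrier_mat m k" and z: "z \<in> carrier_vec k" and k: "0 < k"
  shows "R *\<^sub>v z = z $ 0 \<cdot>\<^sub>v col R 0 + tail_cols R *\<^sub>v vec_last z (k - 1)"
proof (rule eq_vecI)
  fix i assume "i < dim_vec (z $ 0 \<cdot>\<^sub>v col R 0 + tail_cols R *\<^sub>v vec_last z (k - 1))"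
  then have i: "i < m"
    using R by (simp add: tail_cols_def)
  obtain k' where k': "k = Suc k'"
    using k by (cases k) auto
  show "(R *\<^sub>v z) $ i = (z $ 0 \<cdot>\<^sub>v col R 0 + tail_cols R *\<^sub>v vec_last z (k - 1)) $ i"
    using R z i by (simp add: k' tail_cols_def scalar_prod_def atLeast0LessThan sum.lessThan_Suc_shift
        vec_last_def mult.commute del: sum.lessThan_Suc)
qed (use R in \<open>simp add: tail_cols_def\<close>)

lemma sum_cols_eq_sum_tail_cols:
  assumes "R \<in> carrier_mat m k" "0 < k"
  shows "(\<Sum>i\<in>{1..<k}. f (col R i) i) = (\<Sum>j<k - 1. f (col (tail_cols R) j) (Suc j))"
  using assms col_tail_cols[OF assms(1)] sum.shift_bounds_Suc_ivl[of "\<lambda>i. f (col R i) i" 0 "k - 1"]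
  by (simp add: atLeast0LessThan)

lemma vnorm_mult_mat_vec_split_first_col_le:
  fixes R :: "complex mat"
  assumes R: "R \<in> carrier_mat m k" and z: "z \<in> carrier_vec k" "0 < k" "cmod (z $ 0) \<le> 1"
  shows "vnorm (R *\<^sub>v z) \<le> vnorm (col R 0) + vnorm (tail_cols R *\<^sub>v vec_last z (k - 1))"
proof -
  have "vnorm (R *\<^sub>v z) \<le> vnorm (z $ 0 \<cdot>\<^sub>v col R 0) + vnorm (tail_cols R *\<^sub>v vec_last z (k - 1))"
    unfolding mult_mat_vec_split_first_col[OF R z(1,2)]
    by (rule vnorm_add_le) (use R in \<open>simp add: tail_cols_def\<close>)
  moreover have "vnorm (z $ 0 \<cdot>\<^sub>v col R 0) \<le> vnorm (col R 0)"
    using z(3) by (simp add: vnorm_smult mult_left_le_one_le)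
  ultimately show ?thesis
    by linarith
qed

lemma power2_vnorm_split_first:
  assumes "z \<in> carrier_vec k" "0 < k"
  shows "(vnorm z)\<^sup>2 = (cmod (z $ 0))\<^sup>2 + (vnorm (vec_last z (k - 1)))\<^sup>2"
  using assms by (cases k) (simp_all add: power2_vnorm sum.lessThan_Suc_shift vec_last_def del: sum.lessThan_Suc)

lemma sin_vangle_eq:
  assumes s: "(cmod (vinner xh x))\<^sup>2 + s\<^sup>2 = 1" "0 \<le> s"
  shows "sin (vangle x xh) = s"
proof -
  have "(cmod (vinner xh x))\<^sup>2 \<le> 1"
    using s(1) zero_le_power2[of s] by linarith
  then have "cmod (vinner xh x) \<le> 1"
    by (simp add: abs_square_le_1)
  then have "sin (vangle x xh) = sqrt (1 - (cmod (vinner xh x))\<^sup>2)"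
    unfolding vangle_def using norm_ge_zero[of "vinner xh x"] by (intro sin_arccos) linarith+
  also have "1 - (cmod (vinner xh x))\<^sup>2 = s\<^sup>2"
    using s(1) by simp
  finally show ?thesis
    using s(2) by simp
qed

theorem ritz_residual_reduction:
  fixes A X P :: "complex mat"
  assumes A: "A \<in> carrier_mat n n" "hermitian_mat A"
    and X: "X \<in> carrier_mat n k" "0 < k" and P: "P \<in> carrier_mat n m"
    and res: "X * mat_adjoint X + P * mat_adjoint P = 1\<^sub>m n"
    and ritz: "mat_adjoint X * A * X = diag_of k lh"
    and x: "x \<in> carrier_vec n" "A *\<^sub>v x = l \<cdot>\<^sub>v x" "vnorm x = 1"
  defines "y \<equiv> mat_adjoint P *\<^sub>v x" and "w \<equiv> vec_last (mat_adjoint X *\<^sub>v x) (k - 1)"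
    and "R \<equiv> mat_adjoint P * A * X"
  shows "sin (vangle x (col X 0)) = sqrt ((vnorm y)\<^sup>2 + (vnorm w)\<^sup>2)"
    and "spec_dist l (mat_adjoint P * A * P) * ereal (vnorm y) \<le>
      ereal (vnorm (col R 0) + vnorm (tail_cols R *\<^sub>v w))"
    and "j < k - 1 \<Longrightarrow> cmod (l - lh (Suc j)) * cmod (w $ j) = cmod (vinner (col (tail_cols R) j) y)"
proof -
  define z where "z = mat_adjoint X *\<^sub>v x"
  note eqs = eigenvector_ritz_equations[OF A X(1) P res ritz x(1,2), folded z_def y_def R_def]
  have z: "z \<in> carrier_vec k" and y: "y \<in> carrier_vec m" and R: "R \<in> carrier_mat m k"
    using mult_mat_vec_carrier[OF mat_adjoint_carrier[OF X(1)] x(1)]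
      mult_mat_vec_carrier[OF mat_adjoint_carrier[OF P] x(1)] A X P
    by (simp_all add: z_def y_def R_def mult_carrier_mat[of _ m n])
  have norms: "(cmod (z $ 0))\<^sup>2 + ((vnorm y)\<^sup>2 + (vnorm w)\<^sup>2) = 1"
    using power2_vnorm_resolution[OF X(1) P res x(1)] power2_vnorm_split_first[OF z X(2)] x(3)
    by (simp add: z_def y_def w_def)
  have z0: "z $ 0 = vinner (col X 0) x"
    unfolding z_def by (rule index_mat_adjoint_mult_vec) (use X x in auto)
  show "sin (vangle x (col X 0)) = sqrt ((vnorm y)\<^sup>2 + (vnorm w)\<^sup>2)"
    using norms by (intro sin_vangle_eq) (simp_all add: z0)
  have "(cmod (z $ 0))\<^sup>2 \<le> 1"
    using norms zero_le_power2[of "vnorm y"] zero_le_power2[of "vnorm w"] by linarith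
  then have "cmod (z $ 0) \<le> 1"
    by (simp add: abs_square_le_1)
  then have "vnorm (R *\<^sub>v z) \<le> vnorm (col R 0) + vnorm (tail_cols R *\<^sub>v w)"
    unfolding w_def z_def[symmetric] by (rule vnorm_mult_mat_vec_split_first_col_le[OF R z X(2)])
  moreover have "spec_dist l (mat_adjoint P * A * P) * ereal (vnorm y) \<le> ereal (vnorm (R *\<^sub>v z))"
    unfolding eqs(2)[symmetric]
    by (rule spec_dist_mult_vnorm_le[OF _ hermitian_mat_congruence[OF A P] y])
      (use A P in \<open>simp add: mult_carrier_mat[of _ m n]\<close>)
  ultimately show "spec_dist l (mat_adjoint P * A * P) * ereal (vnorm y) \<le>
      ereal (vnorm (col R 0) + vnorm (tail_cols R *\<^sub>v w))"
    using order_trans ereal_less_eq(3) by blast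
  show "cmod (l - lh (Suc j)) * cmod (w $ j) = cmod (vinner (col (tail_cols R) j) y)" if j: "j < k - 1"
  proof -
    have "(l - lh (Suc j)) * w $ j = vinner (col (tail_cols R) j) y"
      using eqs(1)[of "Suc j"] j
      using index_vec_last_tail[OF z j] col_tail_cols[OF R j] by (simp add: w_def z_def[symmetric])
    then show ?thesis
      by (metis norm_mult)
  qed
qed

section \<open>The two residual bounds\<close>

lemma tail_bounds_spec_norm:
  assumes R: "R \<in> carrier_mat m p" "0 < p" and y: "y \<in> carrier_vec m" and w: "w \<in> carrier_vec p"
    and gap: "0 < gap" and comp: "\<And>j. j < p \<Longrightarrow> gap * cmod (w $ j) \<le> cmod (vinner (col R j) y)"
  shows "vnorm w \<le> spec_norm R / gap * vnorm y"
    and "vnorm (R *\<^sub>v w) \<le> (spec_norm R)\<^sup>2 / gap * vnorm y"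
proof -
  have "(gap * vnorm w)\<^sup>2 = (\<Sum>j<p. (gap * cmod (w $ j))\<^sup>2)"
    using w by (simp add: power_mult_distrib power2_vnorm sum_distrib_left)
  also have "\<dots> \<le> (\<Sum>j<p. (cmod ((mat_adjoint R *\<^sub>v y) $ j))\<^sup>2)"
  proof (rule sum_mono)
    fix j assume "j \<in> {..<p}"
    then have "(mat_adjoint R *\<^sub>v y) $ j = vinner (col R j) y"
      by (intro index_mat_adjoint_mult_vec) (use R y in auto)
    with comp[of j] gap \<open>j \<in> {..<p}\<close>
    show "(gap * cmod (w $ j))\<^sup>2 \<le> (cmod ((mat_adjoint R *\<^sub>v y) $ j))\<^sup>2"
      by (intro power_mono) auto
  qed
  also have "\<dots> = (vnorm (mat_adjoint R *\<^sub>v y))\<^sup>2"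
    using R by (simp add: power2_vnorm)
  finally have "gap * vnorm w \<le> vnorm (mat_adjoint R *\<^sub>v y)"
    by (rule power2_le_imp_le) simp
  also have "\<dots> \<le> spec_norm R * vnorm y"
    by (rule vnorm_mat_adjoint_mult_le[OF R y])
  finally show w_le: "vnorm w \<le> spec_norm R / gap * vnorm y"
    using gap by (simp add: field_simps)
  have "vnorm (R *\<^sub>v w) \<le> spec_norm R * vnorm w"
    by (rule vnorm_mult_mat_vec_le[OF R(1) w])
  also have "\<dots> \<le> spec_norm R * (spec_norm R / gap * vnorm y)"
    by (intro mult_left_mono w_le spec_norm_nonneg[OF R])
  finally show "vnorm (R *\<^sub>v w) \<le> (spec_norm R)\<^sup>2 / gap * vnorm y"
    by (simp add: power2_eq_square)
qed

lemma tail_bounds_cols: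
  assumes R: "R \<in> carrier_mat m p" and w: "w \<in> carrier_vec p"
    and mu: "\<And>j. j < p \<Longrightarrow> 0 < \<mu> j"
    and comp: "\<And>j. j < p \<Longrightarrow> \<mu> j * cmod (w $ j) \<le> vnorm (col R j) * t"
  shows "vnorm w \<le> (\<Sum>j<p. vnorm (col R j) / \<mu> j) * t"
    and "vnorm (R *\<^sub>v w) \<le> (\<Sum>j<p. (vnorm (col R j))\<^sup>2 / \<mu> j) * t"
proof -
  have wj: "cmod (w $ j) \<le> vnorm (col R j) / \<mu> j * t" if "j < p" for j
    using comp[OF that] mu[OF that] by (simp add: field_simps)
  have "vnorm w \<le> (\<Sum>j<p. cmod (w $ j))"
    using w by (simp add: vnorm_eq_L2_set L2_set_le_sum)
  also have "\<dots> \<le> (\<Sum>j<p. vnorm (col R j) / \<mu> j * t)"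
    using wj by (intro sum_mono) auto
  finally show "vnorm w \<le> (\<Sum>j<p. vnorm (col R j) / \<mu> j) * t"
    by (simp add: sum_distrib_right)
  have "vnorm (R *\<^sub>v w) \<le> (\<Sum>j<p. cmod (w $ j) * vnorm (col R j))"
    by (rule vnorm_mult_mat_vec_le_sum_cols[OF R w])
  also have "\<dots> \<le> (\<Sum>j<p. (vnorm (col R j))\<^sup>2 / \<mu> j * t)"
  proof (rule sum_mono)
    fix j assume "j \<in> {..<p}"
    then have "cmod (w $ j) * vnorm (col R j) \<le> vnorm (col R j) / \<mu> j * t * vnorm (col R j)"
      using wj by (intro mult_right_mono) auto
    then show "cmod (w $ j) * vnorm (col R j) \<le> (vnorm (col R j))\<^sup>2 / \<mu> j * t"
      by (simp add: power2_eq_square mult_ac)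
  qed
  finally show "vnorm (R *\<^sub>v w) \<le> (\<Sum>j<p. (vnorm (col R j))\<^sup>2 / \<mu> j) * t"
    by (simp add: sum_distrib_right)
qed

lemma ereal_residual_bound:
  fixes Gap :: ereal and c \<rho> t s B :: real
  assumes Gap: "ereal c < Gap" "Gap * ereal t \<le> ereal (\<rho> + c * t)"
    and t: "0 \<le> t" and s: "0 \<le> s" "s \<le> B * t"
  shows "ereal (sqrt (t\<^sup>2 + s\<^sup>2)) \<le> ereal \<rho> / (Gap - ereal c) * ereal (sqrt (1 + B\<^sup>2))"
proof -
  have "sqrt (t\<^sup>2 + s\<^sup>2) \<le> sqrt (t\<^sup>2 + (B * t)\<^sup>2)"
    using s by (simp add: power_mono)
  also have "t\<^sup>2 + (B * t)\<^sup>2 = t\<^sup>2 * (1 + B\<^sup>2)"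
    by (simp add: power_mult_distrib algebra_simps)
  also have "sqrt \<dots> = t * sqrt (1 + B\<^sup>2)"
    using t by (simp add: real_sqrt_mult)
  finally have sn: "sqrt (t\<^sup>2 + s\<^sup>2) \<le> t * sqrt (1 + B\<^sup>2)" .
  show ?thesis
  proof (cases Gap)
    case (real g)
    with Gap have gc: "0 < g - c" and "(g - c) * t \<le> \<rho>"
      by (simp_all add: algebra_simps)
    then have "t \<le> \<rho> / (g - c)"
      by (simp add: field_simps)
    with sn have "sqrt (t\<^sup>2 + s\<^sup>2) \<le> \<rho> / (g - c) * sqrt (1 + B\<^sup>2)"
      by (meson mult_right_mono order_trans real_sqrt_ge_zero add_nonneg_nonneg zero_le_one zero_le_power2)
    with real gc show ?thesis
      by simp
  next
    case PInf
    with Gap(2) t have "t = 0"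
      by (cases "t = 0") auto
    with PInf sn show ?thesis
      by simp
  next
    case MInf
    with Gap show ?thesis
      by simp
  qed
qed

theorem sin_bound_spec_norm:
  assumes R: "R \<in> carrier_mat m p" "0 < p" and y: "y \<in> carrier_vec m" and w: "w \<in> carrier_vec p"
    and gap: "0 < gap" "\<And>j. j < p \<Longrightarrow> gap \<le> \<mu> j"
    and comp: "\<And>j. j < p \<Longrightarrow> \<mu> j * cmod (w $ j) = cmod (vinner (col R j) y)"
    and Gap: "ereal ((spec_norm R)\<^sup>2 / gap) < Gap" "Gap * ereal (vnorm y) \<le> ereal (\<rho> + vnorm (R *\<^sub>v w))"
  shows "ereal (sqrt ((vnorm y)\<^sup>2 + (vnorm w)\<^sup>2)) \<le>
    ereal \<rho> / (Gap - ereal ((spec_norm R)\<^sup>2 / gap)) * ereal (sqrt (1 + (spec_norm R)\<^sup>2 / gap\<^sup>2))"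
proof -
  have "gap * cmod (w $ j) \<le> cmod (vinner (col R j) y)" if "j < p" for j
    using mult_right_mono[OF gap(2)[OF that] norm_ge_zero[of "w $ j"]] comp[OF that] by simp
  note tail = tail_bounds_spec_norm[OF R y w gap(1) this]
  have "Gap * ereal (vnorm y) \<le> ereal (\<rho> + (spec_norm R)\<^sup>2 / gap * vnorm y)"
    using Gap(2) tail(2) by (simp add: order_trans)
  from ereal_residual_bound[OF Gap(1) this vnorm_nonneg vnorm_nonneg tail(1)] show ?thesis
    by (simp add: power_divide)
qed

theorem sin_bound_cols:
  assumes R: "R \<in> carrier_mat m p" and y: "y \<in> carrier_vec m" and w: "w \<in> carrier_vec p"
    and mu: "\<And>j. j < p \<Longrightarrow> 0 < \<mu> j"
    and comp: "\<And>j. j < p \<Longrightarrow> \<mu> j * cmod (w $ j) = cmod (vinner (col R j) y)"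
    and Gap: "ereal (\<Sum>j<p. (vnorm (col R j))\<^sup>2 / \<mu> j) < Gap"
      "Gap * ereal (vnorm y) \<le> ereal (\<rho> + vnorm (R *\<^sub>v w))"
  shows "ereal (sqrt ((vnorm y)\<^sup>2 + (vnorm w)\<^sup>2)) \<le>
    ereal \<rho> / (Gap - ereal (\<Sum>j<p. (vnorm (col R j))\<^sup>2 / \<mu> j)) *
      ereal (sqrt (1 + (\<Sum>j<p. vnorm (col R j) / \<mu> j)\<^sup>2))"
proof -
  have "\<mu> j * cmod (w $ j) \<le> vnorm (col R j) * vnorm y" if "j < p" for j
    using comp[OF that] norm_vinner_le[of "col R j" y] R y by simp
  note tail = tail_bounds_cols[OF R w mu this]
  have "Gap * ereal (vnorm y) \<le> ereal (\<rho> + (\<Sum>j<p. (vnorm (col R j))\<^sup>2 / \<mu> j) * vnorm y)"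
    using Gap(2) tail(2) by (simp add: order_trans)
  from ereal_residual_bound[OF Gap(1) this vnorm_nonneg vnorm_nonneg tail(1)] show ?thesis .
qed

theorem sin_angle_ritz_bounds:
  fixes A X P :: "complex mat"
  assumes A: "A \<in> carrier_mat n n" "hermitian_mat A"
    and X: "X \<in> carrier_mat n k" "2 \<le> k" and P: "P \<in> carrier_mat n m"
    and res: "X * mat_adjoint X + P * mat_adjoint P = 1\<^sub>m n"
    and ritz: "mat_adjoint X * A * X = diag_of k lh"
    and x: "eigenvector A x l" "vnorm x = 1"
  defines "R \<equiv> mat_adjoint P * A * X" and "Gap \<equiv> spec_dist l (mat_adjoint P * A * P)"
    and "gap \<equiv> Min {cmod (l - lh i) | i. 1 \<le> i \<and> i < k}"
  shows "0 < gap \<Longrightarrow> ereal ((spec_norm (tail_cols R))\<^sup>2 / gap) < Gap \<Longrightarrow>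
      ereal (sin (vangle x (col X 0))) \<le> ereal (vnorm (col R 0)) /
        (Gap - ereal ((spec_norm (tail_cols R))\<^sup>2 / gap)) * ereal (sqrt (1 + (spec_norm (tail_cols R))\<^sup>2 / gap\<^sup>2))"
    and "0 < gap \<Longrightarrow> ereal (\<Sum>i\<in>{1..<k}. (vnorm (col R i))\<^sup>2 / cmod (l - lh i)) < Gap \<Longrightarrow>
      ereal (sin (vangle x (col X 0))) \<le> ereal (vnorm (col R 0)) /
        (Gap - ereal (\<Sum>i\<in>{1..<k}. (vnorm (col R i))\<^sup>2 / cmod (l - lh i))) *
        ereal (sqrt (1 + (\<Sum>i\<in>{1..<k}. vnorm (col R i) / cmod (l - lh i))\<^sup>2))"
proof -
  have k: "0 < k" "0 < k - 1"
    using X(2) by auto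
  have xc: "x \<in> carrier_vec n" "A *\<^sub>v x = l \<cdot>\<^sub>v x"
    using x(1) A by (auto simp: eigenvector_def)
  define y where "y = mat_adjoint P *\<^sub>v x"
  define w where "w = vec_last (mat_adjoint X *\<^sub>v x) (k - 1)"
  define \<mu> where "\<mu> j = cmod (l - lh (Suc j))" for j
  note red = ritz_residual_reduction[OF A X(1) k(1) P res ritz xc x(2), folded y_def w_def R_def Gap_def]
  have R: "R \<in> carrier_mat m k" and y: "y \<in> carrier_vec m" and w: "w \<in> carrier_vec (k - 1)"
    using A X P mult_mat_vec_carrier[OF mat_adjoint_carrier[OF P] xc(1)]
    by (simp_all add: R_def y_def w_def mult_carrier_mat[of _ m n])
  have gap_le: "gap \<le> \<mu> j" if "j < k - 1" for j
    unfolding gap_def \<mu>_def using that by (intro Min_le) auto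
  have comp: "\<mu> j * cmod (w $ j) = cmod (vinner (col (tail_cols R) j) y)" if "j < k - 1" for j
    using red(3)[OF that] by (simp add: \<mu>_def)
  note sums = sum_cols_eq_sum_tail_cols[OF R k(1)]
  show "ereal (sin (vangle x (col X 0))) \<le> ereal (vnorm (col R 0)) /
      (Gap - ereal ((spec_norm (tail_cols R))\<^sup>2 / gap)) * ereal (sqrt (1 + (spec_norm (tail_cols R))\<^sup>2 / gap\<^sup>2))"
    if "0 < gap" "ereal ((spec_norm (tail_cols R))\<^sup>2 / gap) < Gap"
    unfolding red(1) using sin_bound_spec_norm[OF tail_cols_carrier[OF R] k(2) y w that(1) gap_le comp that(2) red(2)] .
  show "ereal (sin (vangle x (col X 0))) \<le> ereal (vnorm (col R 0)) /
      (Gap - ereal (\<Sum>i\<in>{1..<k}. (vnorm (col R i))\<^sup>2 / cmod (l - lh i))) *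
      ereal (sqrt (1 + (\<Sum>i\<in>{1..<k}. vnorm (col R i) / cmod (l - lh i))\<^sup>2))"
    if "0 < gap" "ereal (\<Sum>i\<in>{1..<k}. (vnorm (col R i))\<^sup>2 / cmod (l - lh i)) < Gap"
  proof -
    have "0 < \<mu> j" if "j < k - 1" for j
      using gap_le[OF that] \<open>0 < gap\<close> by linarith
    from sin_bound_cols[OF tail_cols_carrier[OF R] y w this comp _ red(2)] that(2) show ?thesis
      unfolding red(1) sums[of "\<lambda>c i. (vnorm c)\<^sup>2 / cmod (l - lh i)"] sums[of "\<lambda>c i. vnorm c / cmod (l - lh i)"]
        \<mu>_def[symmetric] by blast
  qed
qed

theorem theorem4p1:
  fixes n k :: nat
    and A Q \<Omega> Qp :: "complex mat"
    and lh :: "nat \<Rightarrow> complex"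
    and l :: complex and x :: "complex vec"
  assumes k2: "2 \<le> k" and kn: "k \<le> n"
    and A: "A \<in> carrier_mat n n" "hermitian_mat A"
    and Q: "Q \<in> carrier_mat n k" "mat_adjoint Q * Q = 1\<^sub>m k"
    and Om: "\<Omega> \<in> carrier_mat k k" "unitary_mat \<Omega>"
    and decomp: "mat_adjoint Q * A * Q = \<Omega> * diag_of k lh * mat_adjoint \<Omega>"
    and Qp: "Qp \<in> carrier_mat n (n - k)" "unitary_mat (hcat Q Qp)"
    and eig: "eigenvector A x l" "vnorm x = 1"
  shows
   "let Xh = Q * \<Omega>; xh = col Xh 0;
        R = mat_adjoint Qp * A * Q * \<Omega>; r = (\<lambda>i. col R i);
        A3 = mat_adjoint Qp * A * Qp;
        R2 = mat (n - k) (k - 1) (\<lambda>(i,j). R $$ (i, j + 1));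
        Gap = spec_dist l A3;
        gap = Min {cmod (l - lh i) | i. 1 \<le> i \<and> i < k}
    in (gap > 0 \<and> Gap > ereal ((spec_norm R2)\<^sup>2 / gap) \<longrightarrow>
          ereal (sin (vangle x xh)) \<le>
            ereal (vnorm (r 0)) / (Gap - ereal ((spec_norm R2)\<^sup>2 / gap))
              * ereal (sqrt (1 + (spec_norm R2)\<^sup>2 / gap\<^sup>2)))
     \<and> (gap > 0 \<and> Gap > ereal (\<Sum>i\<in>{1..<k}. (vnorm (r i))\<^sup>2 / cmod (l - lh i)) \<longrightarrow>
          ereal (sin (vangle x xh)) \<le>
            ereal (vnorm (r 0)) / (Gap - ereal (\<Sum>i\<in>{1..<k}. (vnorm (r i))\<^sup>2 / cmod (l - lh i)))
              * ereal (sqrt (1 + (\<Sum>i\<in>{1..<k}. vnorm (r i) / cmod (l - lh i))\<^sup>2)))"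
proof -
  have X: "Q * \<Omega> \<in> carrier_mat n k"
    using Q Om by simp
  have "mat_adjoint Qp * A * Q * \<Omega> = mat_adjoint Qp * A * (Q * \<Omega>)"
    using A Q Om Qp by (simp add: assoc_mult_mat[of _ "n - k" n _ k _ k] mult_carrier_mat[of _ "n - k" n])
  moreover have "mat (n - k) (k - 1) (\<lambda>(i, j). (mat_adjoint Qp * A * (Q * \<Omega>)) $$ (i, j + 1)) =
      tail_cols (mat_adjoint Qp * A * (Q * \<Omega>))"
    using Qp(1) Om(1) by (simp add: tail_cols_def)
  moreover note sin_angle_ritz_bounds[OF A X k2 Qp(1) rayleigh_ritz_basis[OF A(1) Q(1) Om decomp Qp] eig]
  ultimately show ?thesis
    unfolding Let_def by presburger
qed

end
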